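(* Let $\mathcal{F}$ be the family of $1$-Lipschitz functions from $[0,1]$ to $[-1,1]$. There is a universal constant $C$ such that $\mathfrak{R}_T(\mathcal{F}) \le C\sqrt{T}$ for every positive integer $T$.
   Context: The sequential Rademacher complexity of a family $\mathcal{F}$ of functions on $[0,1]$ is $\mathfrak{R}_T(\mathcal{F}) = \sup_{z_1,\ldots,z_T} \mathbb{E}_{\sigma \sim \{\pm 1\}^T}\left[\sup_{f \in \mathcal{F}} \sum_{t=1}^T \sigma_t f(z_t(\sigma_1,\ldots,\sigma_{t-1}))\right]$, where $\sigma$ is uniform on $\{\pm1\}^T$ and the outer supremum is over all tuples $(z_1,\ldots,z_T)$ with $z_t : \{\pm1\}^{t-1} \to [0,1]$. *)

theory Defs
  imports "HOL-Analysis.Analysis"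
begin

text \<open>Sign sequences in {-1,1}^T, represented as lists of length T
  (entry t, 0-indexed, is sigma_(t+1)).\<close>
definition sign_seqs :: "nat \<Rightarrow> real list set" where
  "sign_seqs T = {s. length s = T \<and> set s \<subseteq> {-1, 1}}"

text \<open>Trees: z t p is z_(t+1) evaluated at the prefix p = (sigma_1,...,sigma_t);
  all values lie in [0,1].\<close>
definition unit_trees :: "(nat \<Rightarrow> real list \<Rightarrow> real) set" where
  "unit_trees = {z. \<forall>t p. z t p \<in> {0..1}}"

definition seq_rademacher :: "(real \<Rightarrow> real) set \<Rightarrow> nat \<Rightarrow> real" where
  "seq_rademacher F T =
     (SUP z \<in> unit_trees.
        (\<Sum>\<sigma>\<in>sign_seqs T. (SUP f\<in>F. \<Sum>t<T. \<sigma> ! t * f (z t (take t \<sigma>)))) / 2 ^ T)"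

text \<open>1-Lipschitz functions from [0,1] to [-1,1] (values off [0,1] are irrelevant).\<close>
definition lip1_family :: "(real \<Rightarrow> real) set" where
  "lip1_family = {f. (\<forall>x\<in>{0..1}. \<forall>y\<in>{0..1}. \<bar>f x - f y\<bar> \<le> \<bar>x - y\<bar>)
                    \<and> (\<forall>x\<in>{0..1}. f x \<in> {-1..1})}"

end

theory Submission
  imports Defs
begin

text \<open>Chaining. Telescoping along the grids of mesh 4^(-k), k \<le> K, writes f, up to an error
  4^(-K), as a sum of increments that depend on the point only through its cell j \<in> {0..4^k}
  at level k and are bounded by 4^(1-k). Hence, uniformly in f, level k contributes at most
  4^(1-k) \<Sum>_j |S_j|, where S_j = \<Sum>_t \<sigma>_t [z_t lies in cell j] is a martingale. Orthogonality
  of martingale increments gives E \<Sum>_j S_j^2 = T, so by Cauchy-Schwarz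
  E \<Sum>_j |S_j| \<le> sqrt ((4^k + 1) T), and level k contributes at most 8 * 2^(-k) * sqrt T.
  With K = T the discretisation error T 4^(-T) is below sqrt T, so C = 17 works.\<close>

lemma sign_seqs_0: "sign_seqs 0 = {[]}"
  by (auto simp: sign_seqs_def)

lemma sign_seqs_Suc:
  "sign_seqs (Suc T) = (\<lambda>(s, x). s @ [x]) ` (sign_seqs T \<times> {-1, 1})"
proof (rule set_eqI, rule iffI)
  fix s assume s: "s \<in> sign_seqs (Suc T)"
  then have "s \<noteq> []" by (auto simp: sign_seqs_def)
  then obtain u x where "s = u @ [x]" by (metis rev_exhaust)
  with s show "s \<in> (\<lambda>(s, x). s @ [x]) ` (sign_seqs T \<times> {-1, 1})"
    by (auto simp: sign_seqs_def image_iff)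
qed (auto simp: sign_seqs_def)

lemma sum_sign_seqs_Suc:
  fixes h :: "real list \<Rightarrow> 'b::comm_monoid_add"
  shows "sum h (sign_seqs (Suc T)) = (\<Sum>s\<in>sign_seqs T. h (s @ [1]) + h (s @ [-1]))"
proof -
  have "inj_on (\<lambda>(s, x). s @ [x]) (sign_seqs T \<times> {-1, 1::real})"
    by (auto simp: inj_on_def)
  then have "sum h (sign_seqs (Suc T)) = (\<Sum>p\<in>sign_seqs T \<times> {-1, 1}. h ((\<lambda>(s, x). s @ [x]) p))"
    unfolding sign_seqs_Suc by (rule sum.reindex [unfolded comp_def])
  also have "\<dots> = (\<Sum>s\<in>sign_seqs T. \<Sum>x\<in>{-1, 1}. h (s @ [x]))"
    by (subst sum.cartesian_product) (simp add: case_prod_unfold)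
  also have "\<dots> = (\<Sum>s\<in>sign_seqs T. h (s @ [1]) + h (s @ [-1]))"
    by (simp add: add.commute)
  finally show ?thesis .
qed

lemma card_sign_seqs: "card (sign_seqs T) = 2 ^ T"
proof (induction T)
  case 0
  then show ?case by (simp add: sign_seqs_0)
next
  case (Suc T)
  have "card (sign_seqs (Suc T)) = (\<Sum>s\<in>sign_seqs T. 1 + 1)"
    unfolding card_eq_sum by (rule sum_sign_seqs_Suc)
  then show ?case using Suc by simp
qed

lemma abs_nth_sign_seqs:
  assumes "s \<in> sign_seqs T" and "t < T"
  shows "\<bar>s ! t\<bar> = 1"
proof -
  have "s ! t \<in> {-1, 1}"
    using assms nth_mem [of t s] unfolding sign_seqs_def by blast
  then show ?thesis
    by auto
qed

lemma sum_sign_seqs_martingale_square: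
  fixes a :: "nat \<Rightarrow> real list \<Rightarrow> real"
  shows "(\<Sum>s\<in>sign_seqs T. (\<Sum>t<T. s ! t * a t (take t s))\<^sup>2)
       = (\<Sum>s\<in>sign_seqs T. \<Sum>t<T. (a t (take t s))\<^sup>2)"
proof (induction T)
  case 0
  then show ?case by (simp add: sign_seqs_0)
next
  case (Suc T)
  let ?M = "\<lambda>T s. \<Sum>t<T. s ! t * a t (take t s)"
  let ?Q = "\<lambda>T s. \<Sum>t<T. (a t (take t s))\<^sup>2"
  have M_snoc: "?M (Suc T) (s @ [x]) = ?M T s + x * a T s"
    and Q_snoc: "?Q (Suc T) (s @ [x]) = ?Q T s + (a T s)\<^sup>2"
    if "s \<in> sign_seqs T" for s x
    using that by (auto simp: sign_seqs_def nth_append intro!: sum.cong)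
  \<comment> \<open>The cross terms cancel because the new sign is symmetric given the past.\<close>
  have parallelogram: "(u + v)\<^sup>2 + (u - v)\<^sup>2 = 2 * u\<^sup>2 + 2 * v\<^sup>2" for u v :: real
    by (simp add: power2_eq_square algebra_simps)
  have M_step: "(?M (Suc T) (s @ [1]))\<^sup>2 + (?M (Suc T) (s @ [-1]))\<^sup>2
      = 2 * (?M T s)\<^sup>2 + 2 * (a T s)\<^sup>2" if "s \<in> sign_seqs T" for s
    unfolding M_snoc[OF that] using parallelogram by simp
  have Q_step: "?Q (Suc T) (s @ [1]) + ?Q (Suc T) (s @ [-1]) = 2 * ?Q T s + 2 * (a T s)\<^sup>2"
    if "s \<in> sign_seqs T" for s
    unfolding Q_snoc[OF that] by simp
  have "(\<Sum>s\<in>sign_seqs (Suc T). (?M (Suc T) s)\<^sup>2)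
      = (\<Sum>s\<in>sign_seqs T. 2 * (?M T s)\<^sup>2 + 2 * (a T s)\<^sup>2)"
    unfolding sum_sign_seqs_Suc using M_step by (rule sum.cong [OF refl])
  also have "\<dots> = 2 * (\<Sum>s\<in>sign_seqs T. (?M T s)\<^sup>2) + 2 * (\<Sum>s\<in>sign_seqs T. (a T s)\<^sup>2)"
    by (simp only: sum.distrib sum_distrib_left)
  also have "\<dots> = 2 * (\<Sum>s\<in>sign_seqs T. ?Q T s) + 2 * (\<Sum>s\<in>sign_seqs T. (a T s)\<^sup>2)"
    by (simp only: Suc.IH)
  also have "\<dots> = (\<Sum>s\<in>sign_seqs T. 2 * ?Q T s + 2 * (a T s)\<^sup>2)"
    by (simp only: sum.distrib sum_distrib_left)
  also have "\<dots> = (\<Sum>s\<in>sign_seqs (Suc T). ?Q (Suc T) s)"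
    unfolding sum_sign_seqs_Suc by (rule sum.cong [OF refl]) (rule Q_step [symmetric])
  finally show ?case .
qed

definition signed_count :: "(nat \<Rightarrow> real list \<Rightarrow> 'j) \<Rightarrow> nat \<Rightarrow> 'j \<Rightarrow> real list \<Rightarrow> real" where
  "signed_count c T j s = (\<Sum>t<T. s ! t * of_bool (c t (take t s) = j))"

lemma sum_sign_seqs_signed_count_square:
  assumes "finite J" and "\<And>t p. c t p \<in> J"
  shows "(\<Sum>s\<in>sign_seqs T. \<Sum>j\<in>J. (signed_count c T j s)\<^sup>2) = 2 ^ T * real T"
proof -
  have of_bool_square: "(of_bool P :: real)\<^sup>2 = of_bool P" for P
    by simp
  have "(\<Sum>s\<in>sign_seqs T. \<Sum>j\<in>J. (signed_count c T j s)\<^sup>2)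
      = (\<Sum>j\<in>J. \<Sum>s\<in>sign_seqs T. (signed_count c T j s)\<^sup>2)"
    by (rule sum.swap)
  also have "\<dots> = (\<Sum>j\<in>J. \<Sum>s\<in>sign_seqs T. \<Sum>t<T. of_bool (c t (take t s) = j))"
  proof (rule sum.cong [OF refl])
    fix j
    show "(\<Sum>s\<in>sign_seqs T. (signed_count c T j s)\<^sup>2)
        = (\<Sum>s\<in>sign_seqs T. \<Sum>t<T. of_bool (c t (take t s) = j))"
      using sum_sign_seqs_martingale_square [of "\<lambda>t p. of_bool (c t p = j)" T]
      unfolding signed_count_def of_bool_square .
  qed
  also have "\<dots> = (\<Sum>s\<in>sign_seqs T. \<Sum>t<T. \<Sum>j\<in>J. of_bool (c t (take t s) = j))"
    by (simp only: sum.swap [of _ J])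
  also have "\<dots> = (\<Sum>s\<in>sign_seqs T. \<Sum>t<T. 1)"
    using assms by simp
  also have "\<dots> = 2 ^ T * real T"
    by (simp add: card_sign_seqs)
  finally show ?thesis .
qed

lemma sum_sign_seqs_abs_signed_count_le:
  assumes "finite J" and "\<And>t p. c t p \<in> J"
  shows "(\<Sum>s\<in>sign_seqs T. \<Sum>j\<in>J. \<bar>signed_count c T j s\<bar>) \<le> 2 ^ T * sqrt (real (card J) * real T)"
proof -
  let ?P = "sign_seqs T \<times> J"
  let ?X = "\<lambda>p. \<bar>signed_count c T (snd p) (fst p)\<bar>"
  have sum_X: "(\<Sum>s\<in>sign_seqs T. \<Sum>j\<in>J. \<bar>signed_count c T j s\<bar>) = sum ?X ?P"
    by (subst sum.cartesian_product) (simp add: case_prod_unfold)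
  have sum_X_square: "(\<Sum>p\<in>?P. (?X p)\<^sup>2) = 2 ^ T * real T"
    using sum_sign_seqs_signed_count_square [OF assms]
    by (subst (asm) sum.cartesian_product) (simp add: case_prod_unfold)
  have card_P: "real (card ?P) = 2 ^ T * real (card J)"
    by (simp add: card_cartesian_product card_sign_seqs)
  have "(sum ?X ?P)\<^sup>2 \<le> (2 ^ T)\<^sup>2 * (real (card J) * real T)"
    using sum_squared_le_sum_of_squares [of ?X ?P]
    unfolding sum_X_square card_P by (simp add: power2_eq_square algebra_simps)
  then have "sum ?X ?P \<le> sqrt ((2 ^ T)\<^sup>2 * (real (card J) * real T))"
    by (rule real_le_rsqrt)
  then show ?thesis
    unfolding sum_X by (simp add: real_sqrt_mult)
qed

lemma sum_sign_mult_eq_signed_count: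
  assumes "finite J" and "\<And>t p. c t p \<in> J"
  shows "(\<Sum>t<T. s ! t * D (c t (take t s))) = (\<Sum>j\<in>J. D j * signed_count c T j s)"
proof -
  have select: "s ! t * D (c t p) = (\<Sum>j\<in>J. of_bool (c t p = j) * (D j * s ! t))" for t p
    using assms by (simp add: mult.commute)
  show ?thesis
    unfolding select signed_count_def sum_distrib_left
    by (simp only: sum.swap [of _ "{..<T}"] ac_simps)
qed

lemma sum_sign_mult_le_signed_count:
  assumes "finite J" and "\<And>t p. c t p \<in> J" and "\<And>j. j \<in> J \<Longrightarrow> \<bar>D j\<bar> \<le> B"
  shows "(\<Sum>t<T. s ! t * D (c t (take t s))) \<le> B * (\<Sum>j\<in>J. \<bar>signed_count c T j s\<bar>)"
proof -
  have bound: "D j * signed_count c T j s \<le> B * \<bar>signed_count c T j s\<bar>" if "j \<in> J" for j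
  proof -
    have "D j * signed_count c T j s \<le> \<bar>D j\<bar> * \<bar>signed_count c T j s\<bar>"
      by (metis abs_ge_self abs_mult)
    also have "\<dots> \<le> B * \<bar>signed_count c T j s\<bar>"
      using assms(3) [OF that] by (rule mult_right_mono) simp
    finally show ?thesis .
  qed
  have "(\<Sum>t<T. s ! t * D (c t (take t s))) = (\<Sum>j\<in>J. D j * signed_count c T j s)"
    by (rule sum_sign_mult_eq_signed_count [OF assms(1,2)])
  also have "\<dots> \<le> (\<Sum>j\<in>J. B * \<bar>signed_count c T j s\<bar>)"
    using bound by (rule sum_mono)
  finally show ?thesis
    by (simp only: sum_distrib_left)
qed

definition cell :: "nat \<Rightarrow> real \<Rightarrow> nat" where
  "cell k x = nat \<lfloor>4 ^ k * x\<rfloor>"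

definition grid_point :: "nat \<Rightarrow> real \<Rightarrow> real" where
  "grid_point k x = real (cell k x) / 4 ^ k"

lemma grid_point_eq_floor: "0 \<le> x \<Longrightarrow> grid_point k x = \<lfloor>4 ^ k * x\<rfloor> / 4 ^ k"
  by (simp add: grid_point_def cell_def)

lemma grid_point_le:
  assumes "0 \<le> x"
  shows "grid_point k x \<le> x"
proof -
  have "of_int \<lfloor>4 ^ k * x\<rfloor> \<le> (4::real) ^ k * x"
    by (rule of_int_floor_le)
  then show ?thesis
    using assms by (simp add: grid_point_eq_floor divide_le_eq mult.commute)
qed

lemma diff_grid_point_le:
  assumes "0 \<le> x"
  shows "x - grid_point k x \<le> 1 / 4 ^ k"
proof -
  have "(4::real) ^ k * x < of_int \<lfloor>4 ^ k * x\<rfloor> + 1"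
    by (rule real_of_int_floor_add_one_gt)
  then have "x < (of_int \<lfloor>4 ^ k * x\<rfloor> + 1) / 4 ^ k"
    by (simp add: pos_less_divide_eq mult.commute)
  then show ?thesis
    using assms by (simp add: grid_point_eq_floor add_divide_distrib)
qed

lemma grid_point_in_unit:
  assumes "x \<in> {0..1}"
  shows "grid_point k x \<in> {0..1}"
proof -
  have "0 \<le> grid_point k x"
    by (simp add: grid_point_def)
  moreover have "grid_point k x \<le> x"
    using assms by (simp add: grid_point_le)
  ultimately show ?thesis
    using assms by simp
qed

lemma cell_le: "x \<le> 1 \<Longrightarrow> cell k x \<le> 4 ^ k"
proof -
  assume "x \<le> 1"
  then have "(4::real) ^ k * x \<le> 4 ^ k"
    by simp
  then have "\<lfloor>(4::real) ^ k * x\<rfloor> \<le> 4 ^ k"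
    by (metis floor_mono floor_of_int of_int_numeral of_int_power)
  then show ?thesis
    unfolding cell_def by (simp add: nat_le_iff)
qed

lemma cell_Suc_div: "0 \<le> x \<Longrightarrow> cell (Suc k) x div 4 = cell k x"
proof -
  assume x: "0 \<le> x"
  have "\<lfloor>(4::real) ^ k * x\<rfloor> = \<lfloor>4 * (4 ^ k * x) / real_of_int 4\<rfloor>"
    by simp
  also have "\<dots> = \<lfloor>4 * (4 ^ k * x)\<rfloor> div 4"
    by (rule floor_divide_real_eq_div) simp
  finally have "\<lfloor>(4::real) ^ k * x\<rfloor> = \<lfloor>(4::real) ^ Suc k * x\<rfloor> div 4"
    by (simp add: mult.assoc)
  moreover have "0 \<le> \<lfloor>(4::real) ^ Suc k * x\<rfloor>"
    using x by simp
  ultimately show ?thesis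
    unfolding cell_def by (simp add: nat_div_distrib)
qed

text \<open>\<open>f (grid_point k x) - f (grid_point (k - 1) x)\<close> (just \<open>f (grid_point 0 x)\<close> for \<open>k = 0\<close>),
  written as a function of the cell \<open>j = cell k x\<close>, whose parent cell is \<open>j div 4\<close>.\<close>

definition grid_increment :: "(real \<Rightarrow> real) \<Rightarrow> nat \<Rightarrow> nat \<Rightarrow> real" where
  "grid_increment f k j = (case k of
      0 \<Rightarrow> f (real j)
    | Suc m \<Rightarrow> f (real j / 4 ^ Suc m) - f (real (j div 4) / 4 ^ m))"

lemma sum_grid_increment_cell:
  "0 \<le> x \<Longrightarrow> (\<Sum>k\<le>K. grid_increment f k (cell k x)) = f (grid_point K x)"
  by (induction K) (simp_all add: grid_increment_def grid_point_def cell_Suc_div)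

lemma lip1_family_lipschitz:
  "f \<in> lip1_family \<Longrightarrow> x \<in> {0..1} \<Longrightarrow> y \<in> {0..1} \<Longrightarrow> \<bar>f x - f y\<bar> \<le> \<bar>x - y\<bar>"
  unfolding lip1_family_def by blast

lemma lip1_family_abs_le_1: "f \<in> lip1_family \<Longrightarrow> x \<in> {0..1} \<Longrightarrow> \<bar>f x\<bar> \<le> 1"
  unfolding lip1_family_def by (auto simp: abs_le_iff)

lemma abs_grid_increment_le:
  assumes f: "f \<in> lip1_family" and j: "j \<le> 4 ^ k"
  shows "\<bar>grid_increment f k j\<bar> \<le> 4 / 4 ^ k"
proof (cases k)
  case 0
  then have "real j \<in> {0..1}"
    using j by simp
  then have "\<bar>f (real j)\<bar> \<le> 1"
    by (rule lip1_family_abs_le_1 [OF f])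
  then show ?thesis
    using 0 by (simp add: grid_increment_def)
next
  case (Suc m)
  let ?x = "real j / 4 ^ Suc m" and ?y = "real (j div 4) / 4 ^ m"
  have "j div 4 \<le> 4 ^ m"
    using div_le_mono [OF j, of 4] Suc by simp
  then have "real (j div 4) \<le> 4 ^ m" and "real j \<le> 4 ^ Suc m"
    using j Suc of_nat_le_iff [of "j div 4" "4 ^ m"] of_nat_le_iff [of j "4 ^ Suc m"] by simp_all
  then have in_unit: "?x \<in> {0..1}" "?y \<in> {0..1}"
    by simp_all
  have "real j = 4 * real (j div 4) + real (j mod 4)"
    using mult_div_mod_eq [of 4 j] by (metis of_nat_add of_nat_mult of_nat_numeral)
  then have "?x - ?y = real (j mod 4) / 4 ^ Suc m"
    by (simp add: field_simps)
  moreover have "real (j mod 4) / 4 ^ Suc m \<le> 4 / 4 ^ Suc m"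
    by (rule divide_right_mono) simp_all
  ultimately have "\<bar>?x - ?y\<bar> \<le> 4 / 4 ^ k"
    using Suc by simp
  moreover have "\<bar>grid_increment f k j\<bar> = \<bar>f ?x - f ?y\<bar>"
    using Suc by (simp add: grid_increment_def)
  ultimately show ?thesis
    using lip1_family_lipschitz [OF f in_unit] by linarith
qed

definition chaining_bound :: "(nat \<Rightarrow> real list \<Rightarrow> real) \<Rightarrow> nat \<Rightarrow> nat \<Rightarrow> real list \<Rightarrow> real" where
  "chaining_bound z T K s =
     (\<Sum>k\<le>K. 4 / 4 ^ k * (\<Sum>j\<le>4 ^ k. \<bar>signed_count (\<lambda>t p. cell k (z t p)) T j s\<bar>))
     + real T / 4 ^ K"

lemma lip1_family_sum_le_chaining_bound:
  assumes f: "f \<in> lip1_family" and z: "z \<in> unit_trees" and s: "s \<in> sign_seqs T"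
  shows "(\<Sum>t<T. s ! t * f (z t (take t s))) \<le> chaining_bound z T K s"
proof -
  have z_in_unit: "z t p \<in> {0..1}" for t p
    using z by (simp add: unit_trees_def)
  let ?x = "\<lambda>t. z t (take t s)"
  define r where "r t = f (?x t) - f (grid_point K (?x t))" for t
  have split: "f (?x t) = (\<Sum>k\<le>K. grid_increment f k (cell k (?x t))) + r t" for t
    using sum_grid_increment_cell [where x = "?x t" and K = K and f = f] z_in_unit by (simp add: r_def)
  have level: "(\<Sum>t<T. s ! t * grid_increment f k (cell k (?x t)))
      \<le> 4 / 4 ^ k * (\<Sum>j\<le>4 ^ k. \<bar>signed_count (\<lambda>t p. cell k (z t p)) T j s\<bar>)" for k
    using sum_sign_mult_le_signed_count [where J = "{..4 ^ k}" and c = "\<lambda>t p. cell k (z t p)"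
        and D = "grid_increment f k" and B = "4 / 4 ^ k"]
      z_in_unit cell_le abs_grid_increment_le [OF f] by auto
  have "s ! t * r t \<le> 1 / 4 ^ K" if "t < T" for t
  proof -
    have "s ! t * r t \<le> \<bar>s ! t\<bar> * \<bar>r t\<bar>"
      by (metis abs_ge_self abs_mult)
    also have "\<dots> \<le> \<bar>?x t - grid_point K (?x t)\<bar>"
      unfolding r_def abs_nth_sign_seqs [OF s that]
      using lip1_family_lipschitz [OF f z_in_unit grid_point_in_unit [OF z_in_unit]] by simp
    also have "\<dots> \<le> 1 / 4 ^ K"
      using grid_point_le diff_grid_point_le z_in_unit [of t "take t s"] by simp
    finally show ?thesis .
  qed
  then have remainder: "(\<Sum>t<T. s ! t * r t) \<le> real T / 4 ^ K"
    using sum_mono [of "{..<T}" "\<lambda>t. s ! t * r t" "\<lambda>_. 1 / 4 ^ K"] by simp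
  have "(\<Sum>t<T. s ! t * f (?x t))
      = (\<Sum>k\<le>K. \<Sum>t<T. s ! t * grid_increment f k (cell k (?x t))) + (\<Sum>t<T. s ! t * r t)"
    by (simp only: split distrib_left sum_distrib_left sum.distrib sum.swap [of _ "{..<T}"])
  also have "\<dots> \<le> chaining_bound z T K s"
    unfolding chaining_bound_def by (intro add_mono sum_mono level remainder)
  finally show ?thesis .
qed

lemma level_weight_le:
  assumes "0 \<le> x"
  shows "4 / 4 ^ k * sqrt ((4 ^ k + 1) * x) \<le> 8 * (1 / 2) ^ k * sqrt x"
proof -
  have four_pow: "(4::real) ^ k = 2 ^ k * 2 ^ k"
    by (simp flip: power_mult_distrib)
  have "(4::real) ^ k + 1 \<le> (2 * 2 ^ k)\<^sup>2"
    using one_le_power [of "4::real" k] by (simp add: power2_eq_square four_pow)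
  then have "sqrt ((4 ^ k + 1) * x) \<le> sqrt ((2 * 2 ^ k)\<^sup>2 * x)"
    using assms by (intro real_sqrt_le_mono mult_right_mono)
  also have "\<dots> = 2 * 2 ^ k * sqrt x"
    by (simp add: real_sqrt_mult)
  finally have "4 / 4 ^ k * sqrt ((4 ^ k + 1) * x) \<le> 4 / 4 ^ k * (2 * 2 ^ k * sqrt x)"
    by (rule mult_left_mono) simp
  also have "\<dots> = 8 * (1 / 2) ^ k * sqrt x"
    by (simp add: four_pow field_simps)
  finally show ?thesis .
qed

lemma sum_sign_seqs_chaining_bound_le:
  assumes z: "z \<in> unit_trees"
  shows "(\<Sum>s\<in>sign_seqs T. chaining_bound z T K s) \<le> 2 ^ T * (16 * sqrt (real T) + real T / 4 ^ K)"
proof -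
  have z_in_unit: "z t p \<in> {0..1}" for t p
    using z by (simp add: unit_trees_def)
  let ?A = "\<lambda>k s. \<Sum>j\<le>4 ^ k. \<bar>signed_count (\<lambda>t p. cell k (z t p)) T j s\<bar>"
  have level: "4 / 4 ^ k * (\<Sum>s\<in>sign_seqs T. ?A k s) \<le> 2 ^ T * (8 * (1 / 2) ^ k * sqrt (real T))" for k
  proof -
    have "(\<Sum>s\<in>sign_seqs T. ?A k s) \<le> 2 ^ T * sqrt ((4 ^ k + 1) * real T)"
      using sum_sign_seqs_abs_signed_count_le [of "{..4 ^ k}" "\<lambda>t p. cell k (z t p)" T]
        z_in_unit cell_le by (auto simp: add.commute)
    then have "4 / 4 ^ k * (\<Sum>s\<in>sign_seqs T. ?A k s) \<le> 4 / 4 ^ k * (2 ^ T * sqrt ((4 ^ k + 1) * real T))"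
      by (rule mult_left_mono) simp
    also have "\<dots> = 2 ^ T * (4 / 4 ^ k * sqrt ((4 ^ k + 1) * real T))"
      by simp
    also have "\<dots> \<le> 2 ^ T * (8 * (1 / 2) ^ k * sqrt (real T))"
      by (rule mult_left_mono [OF level_weight_le]) simp_all
    finally show ?thesis .
  qed
  have geometric: "(\<Sum>k\<le>K. (1 / 2 :: real) ^ k) \<le> 2"
    using sum_gp0 [of "1 / 2 :: real" K] by simp
  have "(\<Sum>s\<in>sign_seqs T. chaining_bound z T K s)
      = (\<Sum>k\<le>K. 4 / 4 ^ k * (\<Sum>s\<in>sign_seqs T. ?A k s)) + 2 ^ T * (real T / 4 ^ K)"
    unfolding chaining_bound_def
    by (simp add: sum.distrib sum_distrib_left card_sign_seqs sum.swap [of _ "sign_seqs T"])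
  also have "\<dots> \<le> (\<Sum>k\<le>K. 2 ^ T * (8 * (1 / 2) ^ k * sqrt (real T))) + 2 ^ T * (real T / 4 ^ K)"
    by (intro add_right_mono sum_mono level)
  also have "\<dots> = 2 ^ T * (8 * sqrt (real T)) * (\<Sum>k\<le>K. (1 / 2) ^ k) + 2 ^ T * (real T / 4 ^ K)"
    by (simp add: sum_distrib_left ac_simps)
  also have "\<dots> \<le> 2 ^ T * (8 * sqrt (real T)) * 2 + 2 ^ T * (real T / 4 ^ K)"
    using geometric by (intro add_right_mono mult_left_mono) simp_all
  finally show ?thesis
    by (simp add: algebra_simps)
qed

lemma sum_sign_seqs_SUP_lip1_family_le:
  assumes z: "z \<in> unit_trees" and T: "T > 0"
  shows "(\<Sum>\<sigma>\<in>sign_seqs T. SUP f\<in>lip1_family. \<Sum>t<T. \<sigma> ! t * f (z t (take t \<sigma>)))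
    \<le> 2 ^ T * (17 * sqrt (real T))"
proof -
  have "(\<lambda>_. 0) \<in> lip1_family"
    by (simp add: lip1_family_def)
  then have "(\<Sum>\<sigma>\<in>sign_seqs T. SUP f\<in>lip1_family. \<Sum>t<T. \<sigma> ! t * f (z t (take t \<sigma>)))
      \<le> (\<Sum>\<sigma>\<in>sign_seqs T. chaining_bound z T T \<sigma>)"
    by (intro sum_mono cSUP_least lip1_family_sum_le_chaining_bound [OF _ z]) auto
  also have "\<dots> \<le> 2 ^ T * (16 * sqrt (real T) + real T / 4 ^ T)"
    by (rule sum_sign_seqs_chaining_bound_le [OF z])
  also have "\<dots> \<le> 2 ^ T * (17 * sqrt (real T))"
  proof -
    have "T < 2 ^ T"
      by (rule less_exp)
    also have "(2::nat) ^ T \<le> 4 ^ T"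
      by (rule power_mono) simp_all
    finally have "real T < 4 ^ T"
      by simp
    then have "real T / 4 ^ T \<le> 1"
      by simp
    also have "1 \<le> sqrt (real T)"
      using T by simp
    finally have "real T / 4 ^ T \<le> sqrt (real T)" .
    then show ?thesis
      by simp
  qed
  finally show ?thesis .
qed

theorem lemma5:
  shows "\<exists>C::real. \<forall>T::nat. T > 0 \<longrightarrow> seq_rademacher lip1_family T \<le> C * sqrt (real T)"
proof (intro exI allI impI)
  fix T :: nat
  assume "T > 0"
  have "(\<lambda>_ _. 0) \<in> unit_trees"
    by (simp add: unit_trees_def)
  then show "seq_rademacher lip1_family T \<le> 17 * sqrt (real T)"
    unfolding seq_rademacher_def
    using sum_sign_seqs_SUP_lip1_family_le [OF _ \<open>T > 0\<close>]
    by (intro cSUP_least) (auto simp: divide_le_eq mult.commute)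
qed

end
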